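(* Let $G$ be a graph and let $(P,z)$ be a near-obstruction in $G$. Then the subgraph of $G$ induced by $V(P)\cup\{z\}$ contains an induced subgraph that is a Meyniel obstruction.
   Context: A path $v_0$-$v_1$-$\cdots$-$v_p$ consists of distinct vertices with $v_jv_{j+1}$ edges for all $j$; a chord is an edge of $G$ between two non-consecutive vertices of the path. A near-obstruction in $G$ is a pair $(P,z)$ where $P=v_0$-$\cdots$-$v_p$ is a path in $G$ with $p\ge 3$ odd, $P$ has at most one chord and such a chord (if any) is $v_{t-1}v_{t+1}$ with $0<t<p-1$, $z$ is a vertex of $G$ not on $P$ adjacent to both $v_0$ and $v_p$, and one of the following holds: (Type 1) $v_0v_2$ is the only chord of $P$ and $z$ is adjacent to neither $v_1$ nor $v_2$; (Type 2) $v_1v_3$ is the only chord of $P$ and $z$ is non-adjacent to at least one of $v_1,v_3$; (Type 3) $v_0v_2$ is not a chord of $P$ and $z$ is not adjacent to $v_1$; (Type 4) neither $v_0v_2$ nor $v_1v_3$ is a chord of $P$, and $z$ is adjacent to $v_1$ and not to $v_2$. A Meyniel obstruction is an odd cycle with at least five vertices and at most one chord. *)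

theory Defs
  imports Main
begin

definition graph :: "'a set \<Rightarrow> ('a \<Rightarrow> 'a \<Rightarrow> bool) \<Rightarrow> bool" where
  "graph V E \<longleftrightarrow> (\<forall>x y. E x y \<longrightarrow> x \<in> V \<and> y \<in> V) \<and> (\<forall>x y. E x y \<longrightarrow> E y x) \<and> (\<forall>x. \<not> E x x)"

definition is_path :: "'a set \<Rightarrow> ('a \<Rightarrow> 'a \<Rightarrow> bool) \<Rightarrow> 'a list \<Rightarrow> bool" where
  "is_path V E P \<longleftrightarrow> P \<noteq> [] \<and> distinct P \<and> set P \<subseteq> V \<and>
     (\<forall>j. j + 1 < length P \<longrightarrow> E (P ! j) (P ! (j + 1)))"

definition path_chords :: "('a \<Rightarrow> 'a \<Rightarrow> bool) \<Rightarrow> 'a list \<Rightarrow> (nat \<times> nat) set" where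
  "path_chords E P = {(i, j). i + 2 \<le> j \<and> j < length P \<and> E (P ! i) (P ! j)}"

definition near_obstruction :: "'a set \<Rightarrow> ('a \<Rightarrow> 'a \<Rightarrow> bool) \<Rightarrow> 'a list \<Rightarrow> 'a \<Rightarrow> bool" where
  "near_obstruction V E P z \<longleftrightarrow>
     (let p = length P - 1; ch = path_chords E P in
      is_path V E P \<and> p \<ge> 3 \<and> odd p \<and>
      card ch \<le> 1 \<and>
      (\<forall>(i, j) \<in> ch. j = i + 2 \<and> 0 < i + 1 \<and> i + 1 < p - 1) \<and>
      z \<in> V \<and> z \<notin> set P \<and> E z (P ! 0) \<and> E z (P ! p) \<and>
      ( (ch = {(0, 2)} \<and> \<not> E z (P ! 1) \<and> \<not> E z (P ! 2))
      \<or> (ch = {(1, 3)} \<and> (\<not> E z (P ! 1) \<or> \<not> E z (P ! 3)))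
      \<or> ((0, 2) \<notin> ch \<and> \<not> E z (P ! 1))
      \<or> ((0, 2) \<notin> ch \<and> (1, 3) \<notin> ch \<and> E z (P ! 1) \<and> \<not> E z (P ! 2))))"

definition is_cycle :: "'a set \<Rightarrow> ('a \<Rightarrow> 'a \<Rightarrow> bool) \<Rightarrow> 'a list \<Rightarrow> bool" where
  "is_cycle V E C \<longleftrightarrow> length C \<ge> 3 \<and> distinct C \<and> set C \<subseteq> V \<and>
     (\<forall>i < length C. E (C ! i) (C ! ((i + 1) mod length C)))"

definition cycle_chords :: "('a \<Rightarrow> 'a \<Rightarrow> bool) \<Rightarrow> 'a list \<Rightarrow> (nat \<times> nat) set" where
  "cycle_chords E C = {(i, j). i + 1 < j \<and> j < length C \<and> \<not> (i = 0 \<and> j = length C - 1)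
                              \<and> E (C ! i) (C ! j)}"

text \<open>The subgraph induced by the vertex set of C is a Meyniel obstruction:
  an odd cycle on at least five vertices with at most one chord.\<close>
definition meyniel_obstruction :: "'a set \<Rightarrow> ('a \<Rightarrow> 'a \<Rightarrow> bool) \<Rightarrow> 'a list \<Rightarrow> bool" where
  "meyniel_obstruction V E C \<longleftrightarrow> is_cycle V E C \<and> odd (length C) \<and> length C \<ge> 5 \<and>
     card (cycle_chords E C) \<le> 1"

end

(*
  Let N be the set of positions on P = v_0 ... v_p of the neighbours of z. For x < y in N the
  cycle z v_x ... v_y z has length y - x + 2, and its chords are the chords of P with both ends
  in [x, y] together with the edges from z to the neighbours strictly between x and y. Since p is
  odd and 0, p are in N, a parity argument on the gaps of N gives an odd window: x < y in N with
  y - x odd, at least 3, and at most one element of N strictly inside, as soon as some inner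
  vertex of P is not a neighbour of z, which the type conditions guarantee.

  If P has its chord v_s v_{s+2}, a window containing [s, s+2] may produce a second chord. Then
  one also uses the chordless path obtained from P by skipping v_{s+1}; on it the cycle through
  v_x, ..., v_s, v_{s+2}, ..., v_y has length y - x + 1, so windows of even length become usable,
  and a case analysis on whether s + 1, s and s + 2 lie in N always produces one of the two kinds.
*)
theory Submission
  imports Defs
begin

definition odd_window :: "nat set \<Rightarrow> nat \<Rightarrow> nat \<Rightarrow> bool" where
  "odd_window N x y \<longleftrightarrow> x < y \<and> x \<in> N \<and> y \<in> N \<and> odd (y - x) \<and> 3 \<le> y - x \<and>
     card {i \<in> N. x < i \<and> i < y} \<le> 1"

lemma card_le_1_if_subset_singleton: "A \<subseteq> {a} \<Longrightarrow> card A \<le> 1"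
  using card_mono[of "{a}" A] by simp

lemma odd_windowI:
  assumes "x < y" "x \<in> N" "y \<in> N" "odd (y - x)" "y - x \<noteq> 1" "{i \<in> N. x < i \<and> i < y} \<subseteq> {m}"
  shows "odd_window N x y"
proof -
  have "3 \<le> y - x"
    using assms(1,4,5) by presburger
  then show ?thesis
    using assms card_le_1_if_subset_singleton[OF assms(6)] by (simp add: odd_window_def)
qed

lemma odd_window_inner_unique:
  assumes "odd_window N x y" "i \<in> N" "x < i" "i < y" "j \<in> N" "x < j" "j < y"
  shows "i = j"
proof -
  have "finite {i \<in> N. x < i \<and> i < y}"
    by (rule finite_subset[of _ "{..<y}"]) auto
  moreover have "card {i \<in> N. x < i \<and> i < y} \<le> Suc 0"
    using assms(1) by (simp add: odd_window_def)
  ultimately have "\<forall>i\<in>{i \<in> N. x < i \<and> i < y}. \<forall>j\<in>{i \<in> N. x < i \<and> i < y}. i = j"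
    by (simp add: card_le_Suc0_iff_eq)
  then show ?thesis
    using assms(2-7) by blast
qed

lemma odd_window_at_gap:
  assumes "x \<in> N" "c \<in> N" "x + 2 \<le> c" and gap: "\<And>i. x < i \<Longrightarrow> i < c \<Longrightarrow> i \<notin> N"
  shows "odd (c - x) \<Longrightarrow> odd_window N x c"
    and "even (c - x) \<Longrightarrow> 0 < x \<Longrightarrow> x - 1 \<in> N \<Longrightarrow> odd_window N (x - 1) c"
    and "even (c - x) \<Longrightarrow> Suc c \<in> N \<Longrightarrow> odd_window N x (Suc c)"
proof -
  assume "odd (c - x)"
  then show "odd_window N x c"
    using assms by (intro odd_windowI[where m = x]) auto
next
  assume "even (c - x)" "0 < x" "x - 1 \<in> N"
  moreover have "{i \<in> N. x - 1 < i \<and> i < c} \<subseteq> {x}"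
  proof
    fix i assume i: "i \<in> {i \<in> N. x - 1 < i \<and> i < c}"
    then have "\<not> x < i"
      using gap by blast
    then show "i \<in> {x}"
      using i by auto
  qed
  ultimately show "odd_window N (x - 1) c"
    using assms(2,3) by (intro odd_windowI[where m = x]) auto
next
  assume "even (c - x)" "Suc c \<in> N"
  moreover have "{i \<in> N. x < i \<and> i < Suc c} \<subseteq> {c}"
    using gap by (auto simp: less_Suc_eq)
  ultimately show "odd_window N x (Suc c)"
    using assms(1,3) by (intro odd_windowI[where m = c]) auto
qed

(* The first gap (u - 1, c) of N after a yields a window, possibly after extending it by one
   member on either side; only if u - 1 = a and c + 1 is not in N we recurse on [c, b]. *)
lemma odd_window_exists:
  fixes N :: "nat set"
  assumes "a \<in> N" "b \<in> N" "odd (b - a)" "a < w" "w < b" "w \<notin> N"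
  shows "\<exists>x y. a \<le> x \<and> y \<le> b \<and> odd_window N x y"
  using assms
proof (induction "b - a" arbitrary: a w rule: less_induct)
  case less
  define u where "u = (LEAST u. a < u \<and> u \<notin> N)"
  have u: "a < u" "u \<notin> N" "u \<le> w"
    using LeastI[of "\<lambda>u. a < u \<and> u \<notin> N" w] Least_le[of "\<lambda>u. a < u \<and> u \<notin> N" w] less.prems
    unfolding u_def by auto
  have below_u: "i \<in> N" if "a \<le> i" "i < u" for i
    using less.prems(1) not_less_Least[of i "\<lambda>u. a < u \<and> u \<notin> N"] that
    unfolding u_def by (cases "i = a") auto
  define c where "c = (LEAST c. u < c \<and> c \<in> N)"
  have c: "u < c" "c \<in> N" "c \<le> b"
    using LeastI[of "\<lambda>c. u < c \<and> c \<in> N" b] Least_le[of "\<lambda>c. u < c \<and> c \<in> N" b] u less.prems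
    unfolding c_def by auto
  have gap: "i \<notin> N" if "u - 1 < i" "i < c" for i
    using u(2) not_less_Least[of i "\<lambda>c. u < c \<and> c \<in> N"] that
    unfolding c_def by (cases "i = u") auto
  have "u - 1 \<in> N" "u - 1 + 2 \<le> c"
    using below_u u(1) c(1) by auto
  note window = odd_window_at_gap[OF \<open>u - 1 \<in> N\<close> c(2) \<open>u - 1 + 2 \<le> c\<close> gap]
  consider "odd (c - (u - 1))" | "even (c - (u - 1))" "a < u - 1" | "even (c - (u - 1))" "u - 1 = a"
    using u(1) by linarith
  then show ?case
  proof cases
    case 1
    then show ?thesis
      using window(1) u c by (intro exI[of _ "u - 1"] exI[of _ c]) auto
  next
    case 2
    then show ?thesis
      using window(2) below_u c by (intro exI[of _ "u - 2"] exI[of _ c]) (auto simp: numeral_2_eq_2)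
  next
    case 3
    have "c < b"
      using 3 c less.prems(3) by (cases "c = b") auto
    show ?thesis
    proof (cases "Suc c \<in> N")
      case True
      then show ?thesis
        using window(3) 3 \<open>c < b\<close> by (intro exI[of _ a] exI[of _ "Suc c"]) auto
    next
      case False
      have "Suc c < b"
        using False \<open>c < b\<close> less.prems(2) by (cases "Suc c = b") auto
      moreover have "odd (b - c)"
        using 3 c less.prems(3) \<open>c < b\<close> by presburger
      moreover have "b - c < b - a"
        using u(1) c(1) \<open>c < b\<close> by linarith
      ultimately obtain x y where "c \<le> x" "y \<le> b" "odd_window N x y"
        using less.hyps[of c "Suc c"] c(2) False less.prems(2) by auto
      then show ?thesis
        using u c by (intro exI[of _ x] exI[of _ y]) auto
    qed
  qed
qed

lemma odd_window_subset:
  assumes "odd_window M x y" "N \<subseteq> M" "x \<in> N" "y \<in> N"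
  shows "odd_window N x y"
proof -
  have "card {i \<in> N. x < i \<and> i < y} \<le> card {i \<in> M. x < i \<and> i < y}"
    using assms(2) by (intro card_mono) auto
  then show ?thesis
    using assms by (auto simp: odd_window_def)
qed

(* For a path whose only chord is v_s v_{s+2}: segment_window N s x y means that the cycle
   z v_x ... v_y z has at most one chord, bypass_window N s x y that the odd cycle
   z v_x ... v_s v_{s+2} ... v_y z, which skips v_{s+1}, has at most one chord. *)
definition segment_window :: "nat set \<Rightarrow> nat \<Rightarrow> nat \<Rightarrow> nat \<Rightarrow> bool" where
  "segment_window N s x y \<longleftrightarrow>
     odd_window N x y \<and> (x \<le> s \<and> s + 2 \<le> y \<longrightarrow> {i \<in> N. x < i \<and> i < y} = {})"

definition bypass_window :: "nat set \<Rightarrow> nat \<Rightarrow> nat \<Rightarrow> nat \<Rightarrow> bool" where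
  "bypass_window N s x y \<longleftrightarrow> x \<le> s \<and> s + 2 \<le> y \<and> x \<in> N \<and> y \<in> N \<and>
     even (y - x) \<and> 4 \<le> y - x \<and> card {i \<in> N. x < i \<and> i < y \<and> i \<noteq> Suc s} \<le> 1"

lemma segment_window_exists_off_chord:
  assumes "a \<in> N" "b \<in> N" "odd (b - a)" "a < w" "w < b" "w \<notin> N" and "b < s + 2 \<or> s < a"
  shows "\<exists>x y. segment_window N s x y"
  using odd_window_exists[OF assms(1-6)] assms(7) by (fastforce simp: segment_window_def)

lemma bypass_window_if_straddling:
  assumes "odd_window N x (s + 2)" "x \<le> s" "Suc s \<in> N" "s + 3 \<in> N"
  shows "bypass_window N s x (s + 3)"
proof -
  have "{i \<in> N. x < i \<and> i < s + 3 \<and> i \<noteq> Suc s} \<subseteq> {s + 2}"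
    using odd_window_inner_unique[OF assms(1) _ _ _ assms(3)] assms(2) by fastforce
  moreover have "even (s + 3 - x)"
    using assms(1,2) by (simp add: odd_window_def)
  ultimately show ?thesis
    using assms card_le_1_if_subset_singleton by (auto simp: bypass_window_def odd_window_def)
qed

(* One of [0, s + 1] and [s + 1, p] has odd length, and windows inside it avoid the chord. Only
   if [s + 1, p] lies in N we must look in [0, s + 2] and possibly switch to a bypass window. *)
lemma chord_window_exists_if_middle_in:
  assumes "0 \<in> N" "p \<in> N" "odd p" "s + 2 < p" "Suc s \<in> N"
    and "s = 0 \<Longrightarrow> 1 \<notin> N \<and> 2 \<notin> N" "s = 1 \<Longrightarrow> 1 \<notin> N \<or> 3 \<notin> N"
      "2 \<le> s \<Longrightarrow> 1 \<notin> N \<or> 2 \<notin> N"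
  shows "\<exists>x y. segment_window N s x y \<or> bypass_window N s x y"
proof (cases "even s")
  case True
  then have "2 \<le> s"
    using assms(5,6) by (cases "s = 0") auto
  then obtain w where "w \<in> {1, 2}" "w \<notin> N"
    using assms(8) by blast
  then have "\<exists>x y. segment_window N s x y"
    using segment_window_exists_off_chord[where a = 0 and b = "Suc s" and N = N and w = w and s = s]
      assms(1,5) True \<open>2 \<le> s\<close>
    by auto
  then show ?thesis
    by blast
next
  case False
  show ?thesis
  proof (cases "\<exists>w. Suc s < w \<and> w < p \<and> w \<notin> N")
    case True
    then have "\<exists>x y. segment_window N s x y"
      using segment_window_exists_off_chord[where a = "Suc s" and b = p and N = N and s = s]
        assms(2,3,5) False
      by fastforce
    then show ?thesis
      by blast
  next
    case False
    then have "s + 2 \<in> N" "s + 3 \<in> N"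
      using assms(2,4) by (auto, cases "s + 3 = p", auto)
    obtain w where "w \<notin> N" "0 < w" "w < s + 2"
    proof (cases "s = 1")
      case True
      then show ?thesis
        using that[of 1] assms(7) \<open>s + 2 \<in> N\<close> by (auto simp: numeral_3_eq_3)
    next
      case False
      then have "2 \<le> s"
        using \<open>odd s\<close> by presburger
      then show ?thesis
        using that[of 1] that[of 2] assms(8) by auto
    qed
    then obtain x y where "y \<le> s + 2" "odd_window N x y"
      using odd_window_exists[of 0 N "s + 2" w] assms(1) \<open>s + 2 \<in> N\<close> \<open>odd s\<close> by auto
    then have "segment_window N s x y \<or> bypass_window N s x (s + 3)"
      using bypass_window_if_straddling[of N x s] assms(5) \<open>s + 3 \<in> N\<close>
      by (cases "y < s + 2 \<or> s < x") (auto simp: segment_window_def)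
    then show ?thesis
      by blast
  qed
qed

(* A window end at s + 1 is moved through the chord to s or s + 2. *)
lemma chord_window_of_odd_window_insert:
  assumes window: "odd_window (insert (Suc s) N) x y" and "s \<in> N" "s + 2 \<in> N" "Suc s \<notin> N"
  shows "segment_window N s x y \<or> bypass_window N s s y \<or> bypass_window N s x (s + 2)"
proof -
  let ?M = "insert (Suc s) N"
  have "x < y" "x \<in> ?M" "y \<in> ?M" "odd (y - x)" "3 \<le> y - x"
    using window by (simp_all add: odd_window_def)
  consider "x = Suc s" | "y = Suc s" | "x \<noteq> Suc s" "y \<noteq> Suc s"
    by blast
  then show ?thesis
  proof cases
    case 1
    have "card {i \<in> N. s < i \<and> i < y \<and> i \<noteq> Suc s} \<le> card {i \<in> ?M. x < i \<and> i < y}"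
      using 1 by (intro card_mono) auto
    moreover have "even (y - s)"
      using 1 \<open>odd (y - x)\<close> \<open>x < y\<close> by presburger
    ultimately have "bypass_window N s s y"
      using 1 window \<open>y \<in> ?M\<close> \<open>3 \<le> y - x\<close> assms(2) by (auto simp: bypass_window_def odd_window_def)
    then show ?thesis
      by blast
  next
    case 2
    have "card {i \<in> N. x < i \<and> i < s + 2 \<and> i \<noteq> Suc s} \<le> card {i \<in> ?M. x < i \<and> i < y}"
      using 2 by (intro card_mono) auto
    moreover have "even (s + 2 - x)"
      using 2 \<open>odd (y - x)\<close> \<open>x < y\<close> by presburger
    ultimately have "bypass_window N s x (s + 2)"
      using 2 window \<open>x \<in> ?M\<close> \<open>3 \<le> y - x\<close> assms(3) by (auto simp: bypass_window_def odd_window_def)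
    then show ?thesis
      by blast
  next
    case 3
    then have "odd_window N x y"
      using odd_window_subset[OF window] \<open>x \<in> ?M\<close> \<open>y \<in> ?M\<close> by blast
    moreover have "{i \<in> N. x < i \<and> i < y} = {}" if "x \<le> s" "s + 2 \<le> y"
    proof -
      have "i = Suc s" if "i \<in> N" "x < i" "i < y" for i
        using odd_window_inner_unique[OF window, of i "Suc s"] that \<open>x \<le> s\<close> \<open>s + 2 \<le> y\<close> by simp
      then show ?thesis
        using assms(4) by blast
    qed
    ultimately show ?thesis
      by (simp add: segment_window_def)
  qed
qed

lemma chord_window_exists_if_flanked:
  assumes "0 \<in> N" "p \<in> N" "odd p" "s + 2 < p" "s \<in> N" "s + 2 \<in> N" "Suc s \<notin> N"
    and "s = 0 \<Longrightarrow> 1 \<notin> N \<and> 2 \<notin> N" "s = 1 \<Longrightarrow> 1 \<notin> N \<or> 3 \<notin> N"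
      "2 \<le> s \<Longrightarrow> 1 \<notin> N \<or> 2 \<notin> N"
  shows "\<exists>x y. segment_window N s x y \<or> bypass_window N s x y"
proof -
  have "s \<noteq> 0"
    using assms(6,8) by (cases s) (auto simp: numeral_2_eq_2)
  moreover have "s \<noteq> 1"
    using assms(5,6,9) by (auto simp: numeral_3_eq_3)
  ultimately obtain w where "w \<in> {1, 2}" "w \<notin> N"
    using assms(10) by force
  then have "w \<notin> insert (Suc s) N" "0 < w" "w < p"
    using \<open>s \<noteq> 0\<close> \<open>s \<noteq> 1\<close> assms(4) by auto
  then obtain x y where "odd_window (insert (Suc s) N) x y"
    using odd_window_exists[of 0 "insert (Suc s) N" p w] assms(1-3) by auto
  then show ?thesis
    using chord_window_of_odd_window_insert assms(5-7) by blast
qed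

lemma chord_window_exists:
  assumes "0 \<in> N" "p \<in> N" "odd p" "s + 2 < p"
    and "s = 0 \<Longrightarrow> 1 \<notin> N \<and> 2 \<notin> N" "s = 1 \<Longrightarrow> 1 \<notin> N \<or> 3 \<notin> N"
      "2 \<le> s \<Longrightarrow> 1 \<notin> N \<or> 2 \<notin> N"
  shows "\<exists>x y. segment_window N s x y \<or> bypass_window N s x y"
proof (cases "Suc s \<in> N")
  case True
  then show ?thesis
    using chord_window_exists_if_middle_in assms by blast
next
  case False
  define x0 where "x0 = Max {i \<in> N. i \<le> s}"
  define y0 where "y0 = Min {i \<in> N. s + 2 \<le> i \<and> i \<le> p}"
  have "x0 \<in> {i \<in> N. i \<le> s}"
    unfolding x0_def by (rule Max_in) (use assms(1) in auto)
  then have x0: "x0 \<in> N" "x0 \<le> s"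
    by simp_all
  have below_x0: "i \<le> x0" if "i \<in> N" "i \<le> s" for i
    unfolding x0_def by (rule Max_ge) (use that in auto)
  have "y0 \<in> {i \<in> N. s + 2 \<le> i \<and> i \<le> p}"
    unfolding y0_def by (rule Min_in) (use assms(2,4) in \<open>auto intro: less_imp_le\<close>)
  then have y0: "y0 \<in> N" "s + 2 \<le> y0" "y0 \<le> p"
    by simp_all
  have above_y0: "y0 \<le> i" if "i \<in> N" "s + 2 \<le> i" "i \<le> p" for i
    unfolding y0_def by (rule Min_le) (use that in auto)
  have no_inner: "{i \<in> N. x0 < i \<and> i < y0} = {}"
    using below_x0 above_y0 False y0(3) not_less_eq_eq by fastforce
  consider "odd (y0 - x0)" | "even (y0 - x0)" "4 \<le> y0 - x0" | "x0 = s" "y0 = s + 2"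
    using x0(2) y0(2) by fastforce
  then show ?thesis
  proof cases
    case 1
    then have "segment_window N s x0 y0"
      using x0 y0 no_inner by (auto simp: segment_window_def intro!: odd_windowI)
    then show ?thesis
      by blast
  next
    case 2
    have inner: "{i \<in> N. x0 < i \<and> i < y0 \<and> i \<noteq> Suc s} = {}"
      using no_inner by blast
    have "bypass_window N s x0 y0"
      using 2 x0 y0 by (simp add: bypass_window_def inner)
    then show ?thesis
      by blast
  next
    case 3
    then show ?thesis
      using chord_window_exists_if_flanked[of N p s] assms x0(1) y0(1) False by blast
  qed
qed

lemma segment_window_chords:
  assumes "segment_window N s x y"
  shows "card {c \<in> {(s, s + 2)}. x \<le> fst c \<and> snd c \<le> y} + card {i \<in> N. x < i \<and> i < y} \<le> 1"
proof -
  have "{c \<in> {(s, s + 2)}. x \<le> fst c \<and> snd c \<le> y} = (if x \<le> s \<and> s + 2 \<le> y then {(s, s + 2)} else {})"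
    by auto
  then show ?thesis
    using assms by (simp add: segment_window_def odd_window_def)
qed

lemma finite_path_chords: "finite (path_chords E P)"
  by (rule finite_subset[of _ "{..<length P} \<times> {..<length P}"]) (auto simp: path_chords_def)

lemma is_cycle_Cons:
  assumes "graph V E" "is_path V E Q" "z \<in> V" "z \<notin> set Q" "2 \<le> length Q"
    and "E z (Q ! 0)" "E z (Q ! (length Q - 1))"
  shows "is_cycle V E (z # Q)"
  unfolding is_cycle_def
proof (intro conjI allI impI)
  show "distinct (z # Q)" "set (z # Q) \<subseteq> V"
    using assms(2-4) by (auto simp: is_path_def)
  fix i assume i: "i < length (z # Q)"
  show "E ((z # Q) ! i) ((z # Q) ! ((i + 1) mod length (z # Q)))"
  proof (cases "i = length Q")
    case True
    have "(z # Q) ! length Q = Q ! (length Q - 1)"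
      using assms(5) by (cases "length Q") auto
    then show ?thesis
      using True assms(1,7) by (auto simp: graph_def)
  next
    case False
    then show ?thesis
      using i assms(2,6) by (cases i) (auto simp: is_path_def)
  qed
qed (use assms(5) in simp)

lemma cycle_chords_Cons:
  "cycle_chords E (z # Q) =
     (\<lambda>k. (0, Suc k)) ` {k. 0 < k \<and> Suc k < length Q \<and> E z (Q ! k)} \<union> map_prod Suc Suc ` path_chords E Q"
  (is "?C = ?Z \<union> ?P")
proof (intro equalityI subsetI)
  fix c assume "c \<in> ?C"
  then obtain i j where c: "c = (i, j)" "i + 1 < j" "j \<le> length Q" "\<not> (i = 0 \<and> j = length Q)"
    and "E ((z # Q) ! i) ((z # Q) ! j)"
    by (auto simp: cycle_chords_def)
  then show "c \<in> ?Z \<union> ?P"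
    by (cases i; cases j) (auto simp: path_chords_def image_iff)
qed (auto simp: cycle_chords_def path_chords_def)

lemma meyniel_obstruction_Cons:
  assumes "graph V E" "is_path V E Q" "z \<in> V" "z \<notin> set Q"
    and "even (length Q)" "4 \<le> length Q" "E z (Q ! 0)" "E z (Q ! (length Q - 1))"
    and "card (path_chords E Q) + card {k. 0 < k \<and> Suc k < length Q \<and> E z (Q ! k)} \<le> 1"
  shows "meyniel_obstruction V E (z # Q)"
proof -
  have "finite {k. 0 < k \<and> Suc k < length Q \<and> E z (Q ! k)}"
    by (rule finite_subset[of _ "{..<length Q}"]) auto
  then have "card (cycle_chords E (z # Q)) \<le> card {k. 0 < k \<and> Suc k < length Q \<and> E z (Q ! k)} + card (path_chords E Q)"
    unfolding cycle_chords_Cons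
    by (rule order_trans[OF card_Un_le add_mono[OF card_image_le card_image_le]])
       (simp_all add: finite_path_chords)
  then show ?thesis
    using assms is_cycle_Cons[OF assms(1-4)] by (simp add: meyniel_obstruction_def)
qed

definition nbr_positions :: "('a \<Rightarrow> 'a \<Rightarrow> bool) \<Rightarrow> 'a \<Rightarrow> 'a list \<Rightarrow> nat set" where
  "nbr_positions E z P = {i. i < length P \<and> E z (P ! i)}"

definition segment :: "'a list \<Rightarrow> nat \<Rightarrow> nat \<Rightarrow> 'a list" where
  "segment P x y = map ((!) P) [x..<Suc y]"

lemma length_segment [simp]: "length (segment P x y) = Suc y - x"
  by (simp add: segment_def del: upt_Suc)

lemma nth_segment [simp]: "k < Suc y - x \<Longrightarrow> segment P x y ! k = P ! (x + k)"
  by (simp add: segment_def del: upt_Suc)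

lemma set_segment: "y < length P \<Longrightarrow> set (segment P x y) \<subseteq> set P"
  by (auto simp: segment_def simp del: upt_Suc)

lemma is_path_segment:
  assumes "is_path V E P" "x \<le> y" "y < length P"
  shows "is_path V E (segment P x y)"
proof -
  have "inj_on ((!) P) {x..<Suc y}"
    using assms by (auto simp: inj_on_def is_path_def nth_eq_iff_index_eq)
  then show ?thesis
    using assms by (auto simp: is_path_def segment_def distinct_map simp del: upt_Suc)
qed

lemma path_chords_segment:
  assumes "y < length P"
  shows "path_chords E (segment P x y) =
    map_prod (\<lambda>i. i - x) (\<lambda>j. j - x) ` {c \<in> path_chords E P. x \<le> fst c \<and> snd c \<le> y}"
proof (intro equalityI subsetI)
  fix c assume "c \<in> path_chords E (segment P x y)"
  then obtain i j where "c = (i, j)" "i + 2 \<le> j" "j < Suc y - x" "E (P ! (x + i)) (P ! (x + j))"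
    by (auto simp: path_chords_def)
  then show "c \<in> map_prod (\<lambda>i. i - x) (\<lambda>j. j - x) ` {c \<in> path_chords E P. x \<le> fst c \<and> snd c \<le> y}"
    using assms by (intro rev_image_eqI[of "(x + i, x + j)"]) (auto simp: path_chords_def)
qed (use assms in \<open>auto simp: path_chords_def le_diff_conv2\<close>)

lemma inner_nbrs_segment:
  "{k. 0 < k \<and> Suc k < length (segment P x y) \<and> E z (segment P x y ! k)} =
     (\<lambda>i. i - x) ` {i. x < i \<and> i < y \<and> E z (P ! i)}"
  by (auto simp: image_iff intro!: exI[of _ "x + k" for k])

definition bypass :: "'a list \<Rightarrow> nat \<Rightarrow> 'a list" where
  "bypass P s = take (Suc s) P @ drop (Suc (Suc s)) P"

lemma length_bypass [simp]: "Suc (Suc s) \<le> length P \<Longrightarrow> length (bypass P s) = length P - 1"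
  by (simp add: bypass_def)

lemma nth_bypass:
  "Suc (Suc s) \<le> length P \<Longrightarrow> i < length P - 1 \<Longrightarrow>
     bypass P s ! i = P ! (if i \<le> s then i else Suc i)"
  by (auto simp: bypass_def nth_append)

lemma set_bypass: "set (bypass P s) \<subseteq> set P"
  using set_take_subset set_drop_subset by (fastforce simp: bypass_def)

lemma is_path_bypass:
  assumes "is_path V E P" "Suc (Suc s) < length P" "E (P ! s) (P ! Suc (Suc s))"
  shows "is_path V E (bypass P s)"
  unfolding is_path_def
proof (intro conjI allI impI)
  show "distinct (bypass P s)"
    using assms(1) set_take_disj_set_drop_if_distinct[of P "Suc s" "Suc (Suc s)"]
    by (auto simp: bypass_def is_path_def)
  show "set (bypass P s) \<subseteq> V"
    using assms(1) set_bypass by (fastforce simp: is_path_def)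
  fix j assume j: "j + 1 < length (bypass P s)"
  have adj: "E (P ! i) (P ! Suc i)" if "Suc i < length P" for i
    using assms(1) that by (simp add: is_path_def)
  consider "j < s" | "j = s" | "s < j" by linarith
  then show "E (bypass P s ! j) (bypass P s ! (j + 1))"
    by cases (use j assms(2,3) adj in \<open>auto simp: nth_bypass\<close>)
qed (use assms(2) in \<open>auto simp: bypass_def\<close>)

lemma path_chords_bypass:
  assumes "path_chords E P \<subseteq> {(s, Suc (Suc s))}" "Suc (Suc s) \<le> length P"
  shows "path_chords E (bypass P s) = {}"
proof -
  let ?f = "\<lambda>i. if i \<le> s then i else Suc i"
  have "(?f i, ?f j) \<in> path_chords E P" if "(i, j) \<in> path_chords E (bypass P s)" for i j
    using that assms(2) by (auto simp: path_chords_def nth_bypass split: if_splits)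
  moreover have "i + 2 \<le> j" if "(i, j) \<in> path_chords E (bypass P s)" for i j
    using that by (simp add: path_chords_def)
  ultimately have "(i, j) \<notin> path_chords E (bypass P s)" for i j
    using assms(1) by (fastforce split: if_splits)
  then show ?thesis
    by auto
qed

lemma meyniel_obstruction_segment:
  assumes "graph V E" "is_path V E P" "z \<in> V" "z \<notin> set P"
    and window: "odd_window (nbr_positions E z P) x y"
    and chords: "card {c \<in> path_chords E P. x \<le> fst c \<and> snd c \<le> y}
                 + card {i \<in> nbr_positions E z P. x < i \<and> i < y} \<le> 1"
  shows "set (z # segment P x y) \<subseteq> set P \<union> {z}" and "meyniel_obstruction V E (z # segment P x y)"
proof -
  have "x < y" "y < length P" "E z (P ! x)" "E z (P ! y)" "odd (y - x)" "3 \<le> y - x"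
    using window by (auto simp: odd_window_def nbr_positions_def)
  then show "set (z # segment P x y) \<subseteq> set P \<union> {z}"
    using set_segment by fastforce
  have "card (path_chords E (segment P x y)) \<le> card {c \<in> path_chords E P. x \<le> fst c \<and> snd c \<le> y}"
    unfolding path_chords_segment[OF \<open>y < length P\<close>]
    by (rule card_image_le) (simp add: finite_path_chords)
  moreover have "card {k. 0 < k \<and> Suc k < length (segment P x y) \<and> E z (segment P x y ! k)}
      \<le> card {i. x < i \<and> i < y \<and> E z (P ! i)}"
    unfolding inner_nbrs_segment by (rule card_image_le) simp
  moreover have "{i \<in> nbr_positions E z P. x < i \<and> i < y} = {i. x < i \<and> i < y \<and> E z (P ! i)}"
    using \<open>y < length P\<close> by (auto simp: nbr_positions_def)
  ultimately have "card (path_chords E (segment P x y))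
      + card {k. 0 < k \<and> Suc k < length (segment P x y) \<and> E z (segment P x y ! k)} \<le> 1"
    using chords by simp
  moreover have "z \<notin> set (segment P x y)"
    using assms(4) set_segment[OF \<open>y < length P\<close>] by blast
  moreover have "even (length (segment P x y))" "4 \<le> length (segment P x y)"
    using \<open>odd (y - x)\<close> \<open>3 \<le> y - x\<close> \<open>x < y\<close> by (simp_all add: Suc_diff_le)
  moreover have "E z (segment P x y ! 0)" "E z (segment P x y ! (length (segment P x y) - 1))"
    using \<open>E z (P ! x)\<close> \<open>E z (P ! y)\<close> \<open>x < y\<close> by simp_all
  ultimately show "meyniel_obstruction V E (z # segment P x y)"
    using meyniel_obstruction_Cons[OF assms(1) is_path_segment[OF assms(2)] assms(3)] \<open>x < y\<close> \<open>y < length P\<close>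
    by simp
qed

lemma meyniel_obstruction_bypass:
  assumes "graph V E" "is_path V E P" "z \<in> V" "z \<notin> set P"
    and chord: "path_chords E P = {(s, s + 2)}"
    and window: "bypass_window (nbr_positions E z P) s x y"
  shows "set (z # segment (bypass P s) x (y - 1)) \<subseteq> set P \<union> {z}"
    and "meyniel_obstruction V E (z # segment (bypass P s) x (y - 1))"
proof -
  let ?N = "nbr_positions E z P" and ?P' = "bypass P s"
  let ?f = "\<lambda>i. if i \<le> s then i else Suc i"
  have y: "y < length P" "s + 2 \<le> y" "x \<le> s" "even (y - x)" "4 \<le> y - x"
    using window by (auto simp: bypass_window_def nbr_positions_def)
  have "E (P ! s) (P ! Suc (Suc s))"
    using chord by (auto simp: path_chords_def)
  then have path: "is_path V E ?P'"
    using is_path_bypass[OF assms(2)] y by simp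
  have nbr: "i \<in> nbr_positions E z ?P' \<longleftrightarrow> i < length P - 1 \<and> ?f i \<in> ?N" for i
    using y by (auto simp: nbr_positions_def nth_bypass)
  have "card {i \<in> nbr_positions E z ?P'. x < i \<and> i < y - 1}
      \<le> card {i \<in> ?N. x < i \<and> i < y \<and> i \<noteq> Suc s}"
    by (rule card_inj_on_le[where f = ?f]) (auto simp: inj_on_def nbr split: if_splits)
  then have window': "odd_window (nbr_positions E z ?P') x (y - 1)"
    using window y nbr[of x] nbr[of "y - 1"] by (auto simp: odd_window_def bypass_window_def)
  have "z \<notin> set ?P'"
    using assms(4) set_bypass[of P s] by blast
  have "path_chords E ?P' = {}"
    using chord y by (intro path_chords_bypass) auto
  then have "card {c \<in> path_chords E ?P'. x \<le> fst c \<and> snd c \<le> y - 1}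
      + card {i \<in> nbr_positions E z ?P'. x < i \<and> i < y - 1} \<le> 1"
    using window' by (simp add: odd_window_def)
  note obstruction = meyniel_obstruction_segment[OF assms(1) path assms(3) \<open>z \<notin> set ?P'\<close> window' this]
  then show "set (z # segment ?P' x (y - 1)) \<subseteq> set P \<union> {z}"
    using set_bypass[of P s] by blast
  show "meyniel_obstruction V E (z # segment ?P' x (y - 1))"
    by (rule obstruction(2))
qed

lemma near_obstruction_cases:
  assumes "near_obstruction V E P z"
  obtains "path_chords E P = {}" "1 \<notin> nbr_positions E z P \<or> 2 \<notin> nbr_positions E z P"
  | s where "path_chords E P = {(s, s + 2)}" "s + 2 < length P - 1"
    "s = 0 \<Longrightarrow> 1 \<notin> nbr_positions E z P \<and> 2 \<notin> nbr_positions E z P"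
    "s = 1 \<Longrightarrow> 1 \<notin> nbr_positions E z P \<or> 3 \<notin> nbr_positions E z P"
    "2 \<le> s \<Longrightarrow> 1 \<notin> nbr_positions E z P \<or> 2 \<notin> nbr_positions E z P"
proof -
  let ?ch = "path_chords E P" and ?p = "length P - 1"
  have card: "card ?ch \<le> 1" and form: "\<And>i j. (i, j) \<in> ?ch \<Longrightarrow> j = i + 2 \<and> i + 2 < ?p"
    and "3 \<le> ?p"
    and types: "(?ch = {(0, 2)} \<and> \<not> E z (P ! 1) \<and> \<not> E z (P ! 2))
      \<or> (?ch = {(1, 3)} \<and> (\<not> E z (P ! 1) \<or> \<not> E z (P ! 3)))
      \<or> ((0, 2) \<notin> ?ch \<and> \<not> E z (P ! 1))
      \<or> ((0, 2) \<notin> ?ch \<and> (1, 3) \<notin> ?ch \<and> E z (P ! 1) \<and> \<not> E z (P ! 2))"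
    using assms unfolding near_obstruction_def Let_def by fastforce+
  have nbr: "k \<in> nbr_positions E z P \<longleftrightarrow> E z (P ! k)" if "k \<le> 3" for k
    using that \<open>3 \<le> ?p\<close> by (auto simp: nbr_positions_def)
  consider "?ch = {}" | c where "?ch = {c}"
    using card by (auto simp: le_Suc_eq card_1_singleton_iff finite_path_chords)
  then show thesis
  proof cases
    case 1
    then show thesis
      using that(1) types nbr by auto
  next
    case (2 c)
    then obtain s where "?ch = {(s, s + 2)}" "s + 2 < ?p"
      using form by (cases c) auto
    then show thesis
      using that(2)[of s] types nbr by auto
  qed
qed

theorem lemma2:
  fixes V :: "'a set" and E :: "'a \<Rightarrow> 'a \<Rightarrow> bool" and P :: "'a list" and z :: 'a
  assumes "graph V E"
    and "near_obstruction V E P z"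
  shows "\<exists>C. set C \<subseteq> set P \<union> {z} \<and> meyniel_obstruction V E C"
proof -
  let ?N = "nbr_positions E z P" and ?p = "length P - 1"
  have path: "is_path V E P" and z: "z \<in> V" "z \<notin> set P" and p: "odd ?p" "3 \<le> ?p"
    and ends: "0 \<in> ?N" "?p \<in> ?N"
    using assms(2) by (auto simp: near_obstruction_def Let_def nbr_positions_def is_path_def)
  note segment_cycle = meyniel_obstruction_segment[OF assms(1) path z]
  from assms(2) show ?thesis
  proof (cases rule: near_obstruction_cases)
    case 1
    then obtain w where "w \<notin> ?N" "0 < w" "w < ?p"
      using p(2) by fastforce
    then obtain x y where window: "odd_window ?N x y"
      using odd_window_exists[of 0 ?N ?p w] ends p(1) by auto
    moreover have "card {c \<in> path_chords E P. x \<le> fst c \<and> snd c \<le> y} + card {i \<in> ?N. x < i \<and> i < y} \<le> 1"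
      using window 1 by (simp add: odd_window_def)
    ultimately show ?thesis
      using segment_cycle by blast
  next
    case (2 s)
    obtain x y where "segment_window ?N s x y \<or> bypass_window ?N s x y"
      using chord_window_exists[of ?N ?p s] ends p(1) 2 by blast
    then show ?thesis
    proof
      assume window: "segment_window ?N s x y"
      then have "odd_window ?N x y"
        by (simp add: segment_window_def)
      then show ?thesis
        using segment_cycle[OF _ segment_window_chords[OF window, folded 2(1)]] by blast
    next
      assume "bypass_window ?N s x y"
      then show ?thesis
        using meyniel_obstruction_bypass[OF assms(1) path z 2(1)] by blast
    qed
  qed
qed

end
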